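(* Let $L\ge1$, $D\ge1$, a dataset $\{(\mathbf{x}_n,y_n)\}_{n=1}^N\subset\mathbb{R}^D\times\{-1,1\}$, a differentiable loss $\ell(\hat y,y)$, and consider the gradient descent iterates $\mathbf{u}^{(t+1)}=\mathbf{u}^{(t)}-\eta_t\nabla_{\mathbf{u}}\mathcal{L}_{\mathcal{P}_{conv}}(\mathbf{u}^{(t)})$, where $\mathbf{u}=[\mathbf{u}_l]_{l=1}^L$, $\mathbf{u}_l\in\mathbb{R}^D$, and $\mathcal{L}_{\mathcal{P}_{conv}}(\mathbf{u})=\sum_n\ell(\langle\mathbf{x}_n,\mathcal{P}_{conv}(\mathbf{u})\rangle,y_n)$. Let $\hat{\mathbf{u}}^{(t)}=[\hat{\mathbf{u}}^{(t)}_l]_{l=1}^L$ be the Fourier transforms of the $\mathbf{u}^{(t)}_l$. Then for every $l$ and $t$, the update $\Delta\mathbf{u}_l^{(t)}=\mathbf{u}_l^{(t+1)}-\mathbf{u}_l^{(t)}$ satisfies $$\mathcal{F}\Delta\mathbf{u}^{(t)}_l=\hat{\mathbf{u}}^{(t+1)}_l-\hat{\mathbf{u}}^{(t)}_l=-\eta_t\nabla_{\hat{\mathbf{u}}_l}\hat{\mathcal{L}}_{\mathcal{P}_{diag}}(\hat{\mathbf{u}}^{(t)}),$$ where $\hat{\mathcal{L}}_{\mathcal{P}_{diag}}(\hat{\mathbf{u}})=\sum_n\ell(\langle\hat{\mathbf{x}}_n,\mathcal{P}_{diag}(\hat{\mathbf{u}})\rangle,y_n)$ and $\mathcal{P}_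{diag}(\hat{\mathbf{u}})=\hat{\mathbf{u}}_1\odot\cdots\odot\hat{\mathbf{u}}_L$.
   Context: Indices run over $0,\dots,D-1$. $(\mathbf{h}\star\mathbf{u})[d]=\frac{1}{\sqrt D}\sum_{k}\mathbf{u}[k]\mathbf{h}[(d+k)\bmod D]$; $\mathcal{P}_{conv}(\mathbf{u})$ is the vector with $\langle\mathbf{x},\mathcal{P}_{conv}(\mathbf{u})\rangle=((((\mathbf{x}\star\mathbf{u}_1)\star\mathbf{u}_2)\cdots)\star\mathbf{u}_{L-1})^\top\mathbf{u}_L$. $\mathcal{F}\in\mathbb{C}^{D\times D}$ is the DFT matrix $\mathcal{F}[d,p]=\frac{1}{\sqrt D}e^{-2\pi\mathrm{i}dp/D}$ and $\hat{\mathbf{z}}=\mathcal{F}\mathbf{z}$. $\odot$ is the entrywise product. The complex inner product is $\langle\hat{\mathbf{x}},\hat{\mathbf{w}}\rangle=\hat{\mathbf{x}}^\top\hat{\mathbf{w}}^*$ ($^*$ = complex conjugate), so each summand can be written $\ell\big(\hat{\mathbf{u}}_l^{*\top}\mathbf{a}_{n,l},y_n\big)$ with $\mathbf{a}_{n,l}=(\odot_{l'\neq l}\hat{\mathbf{u}}^*_{l'})\odot\hat{\mathbf{x}}_n$; the gradient convention is $\nabla_{\hat{\mathbf{u}}_l}\ell(\hat{\mathbf{u}}_l^{*\top}\mathbf{a},y)=\ell'(\hat{\mathbf{u}}_l^{*\top}\mathbf{a},y)\,\mathbf{a}$, with $\ell'=\partial\ell/\partial\hat y$. *)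

theory Defs
  imports "HOL-Analysis.Analysis"
begin

text \<open>Vectors in R^D / C^D are functions on nat, only the entries 0..D-1 matter.
  Layers are indexed 1..L, data points 1..N.\<close>

definition conv :: "nat \<Rightarrow> (nat \<Rightarrow> real) \<Rightarrow> (nat \<Rightarrow> real) \<Rightarrow> (nat \<Rightarrow> real)" where
  "conv D h u = (\<lambda>d. (1 / sqrt (real D)) * (\<Sum>k<D. u k * h ((d + k) mod D)))"

fun conv_chain :: "nat \<Rightarrow> (nat \<Rightarrow> real) \<Rightarrow> (nat \<Rightarrow> nat \<Rightarrow> real) \<Rightarrow> nat \<Rightarrow> (nat \<Rightarrow> real)" where
  "conv_chain D x u 0 = x"
| "conv_chain D x u (Suc k) = conv D (conv_chain D x u k) (u (Suc k))"

text \<open>The defining value of the inner product <x, P_conv(u)>.\<close>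
definition pconv_inner :: "nat \<Rightarrow> nat \<Rightarrow> (nat \<Rightarrow> real) \<Rightarrow> (nat \<Rightarrow> nat \<Rightarrow> real) \<Rightarrow> real" where
  "pconv_inner D L x u = (\<Sum>d<D. conv_chain D x u (L - 1) d * u L d)"

definition loss_conv ::
  "(real \<Rightarrow> real \<Rightarrow> real) \<Rightarrow> nat \<Rightarrow> (nat \<Rightarrow> nat \<Rightarrow> real) \<Rightarrow> (nat \<Rightarrow> real)
     \<Rightarrow> nat \<Rightarrow> nat \<Rightarrow> (nat \<Rightarrow> nat \<Rightarrow> real) \<Rightarrow> real" where
  "loss_conv lossf N X Y D L u = (\<Sum>n=1..N. lossf (pconv_inner D L (X n) u) (Y n))"

definition grad_conv ::
  "(real \<Rightarrow> real \<Rightarrow> real) \<Rightarrow> nat \<Rightarrow> (nat \<Rightarrow> nat \<Rightarrow> real) \<Rightarrow> (nat \<Rightarrow> real)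
     \<Rightarrow> nat \<Rightarrow> nat \<Rightarrow> (nat \<Rightarrow> nat \<Rightarrow> real) \<Rightarrow> nat \<Rightarrow> nat \<Rightarrow> real" where
  "grad_conv lossf N X Y D L u l d =
     deriv (\<lambda>s. loss_conv lossf N X Y D L (u(l := (u l)(d := u l d + s)))) 0"

definition dft :: "nat \<Rightarrow> (nat \<Rightarrow> complex) \<Rightarrow> (nat \<Rightarrow> complex)" where
  "dft D z = (\<lambda>d. \<Sum>p<D. (cis (- 2 * pi * real d * real p / real D) / complex_of_real (sqrt (real D))) * z p)"

definition cvec :: "(nat \<Rightarrow> real) \<Rightarrow> (nat \<Rightarrow> complex)" where
  "cvec z = (\<lambda>d. complex_of_real (z d))"

definition avec :: "nat \<Rightarrow> nat \<Rightarrow> (nat \<Rightarrow> complex) \<Rightarrow> (nat \<Rightarrow> nat \<Rightarrow> complex) \<Rightarrow> nat \<Rightarrow> (nat \<Rightarrow> complex)" where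
  "avec D L xh uh l = (\<lambda>p. (\<Prod>l'\<in>{1..L} - {l}. cnj (uh l' p)) * xh p)"

text \<open>Gradient of hat L_{P_diag} w.r.t. uhat_l under the stated convention:
  grad of l(uhat_l^{*T} a, y) is l'(uhat_l^{*T} a, y) a, with l' = d l / d yhat.
  The (real-valued) prediction uhat_l^{*T} a is fed to l' via its real part.\<close>
definition grad_diag ::
  "(real \<Rightarrow> real \<Rightarrow> real) \<Rightarrow> nat \<Rightarrow> (nat \<Rightarrow> nat \<Rightarrow> real) \<Rightarrow> (nat \<Rightarrow> real)
     \<Rightarrow> nat \<Rightarrow> nat \<Rightarrow> (nat \<Rightarrow> nat \<Rightarrow> complex) \<Rightarrow> nat \<Rightarrow> nat \<Rightarrow> complex" where
  "grad_diag lossf N X Y D L uh l p =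
     (\<Sum>n=1..N.
        let a = avec D L (dft D (cvec (X n))) uh l in
        complex_of_real (deriv (\<lambda>z. lossf z (Y n)) (Re (\<Sum>q<D. cnj (uh l q) * a q))) * a p)"

end

theory Submission
  imports Defs
begin

(* With the normalisations of conv and dft, the DFT turns circular correlation into a product:
   F (h star v) = F h . conj (F v). With Parseval's identity the prediction <x, P_conv(u)> becomes
   sum_p xhat[p] prod_l conj (uhat_l[p]) = uhat_l^{*T} a_l. Changing one entry u_l[d] by s changes
   uhat_l by s times a column of the DFT matrix, so the prediction is affine in u_l[d] with slope
   the d-th entry of the inverse DFT of a_l. By the chain rule the gradient in u_l is therefore the
   inverse DFT of the gradient in uhat_l, and applying the DFT to a gradient step gives the claim. *)

lemma int_dvd_diff_imp_eq:
  fixes a b D :: nat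
  assumes "a < D" and "b < D" and "int D dvd int a - int b"
  shows "a = b"
  using assms by (metis mod_eq_dvd_iff zmod_int mod_less of_nat_eq_iff)

lemma sum_mod_shift:
  fixes D k :: nat
  shows "(\<Sum>d<D. g ((d + k) mod D)) = (\<Sum>d<D. g d)"
proof -
  have inj: "inj_on (\<lambda>d. (d + k) mod D) {..<D}"
  proof (rule inj_onI)
    fix x y
    assume "x \<in> {..<D}" "y \<in> {..<D}" "(x + k) mod D = (y + k) mod D"
    moreover from this have "int D dvd int (x + k) - int (y + k)"
      by (metis mod_eq_dvd_iff zmod_int)
    ultimately show "x = y"
      by (intro int_dvd_diff_imp_eq) auto
  qed
  moreover have "(\<lambda>d. (d + k) mod D) ` {..<D} = {..<D}"
    by (rule endo_inj_surj) (use inj in auto)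
  ultimately show ?thesis
    using sum.reindex[OF inj, of g] by simp
qed

lemma sum_cis_int_multiple_eq_0:
  assumes "D > 0" and "\<not> int D dvd m"
  shows "(\<Sum>p<D. cis (2 * pi * real_of_int m * real p / real D)) = 0"
proof -
  define z where "z = cis (2 * pi * real_of_int m / real D)"
  have "z \<noteq> 1"
  proof
    assume "z = 1"
    then have "cos (2 * pi * real_of_int m / real D) = 1"
      by (simp add: z_def complex_eq_iff)
    then obtain k :: int where "2 * pi * real_of_int m / real D = real_of_int k * 2 * pi"
      using cos_one_2pi_int by blast
    then have "real_of_int m = real_of_int (int D * k)"
      using assms(1) by (simp add: field_simps)
    then show False
      using assms(2) by (simp only: of_int_eq_iff) simp
  qed
  moreover have "z ^ D = cis (2 * pi * real_of_int m)"
    unfolding z_def Complex.DeMoivre using assms(1) by simp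
  moreover have "(\<Sum>p<D. cis (2 * pi * real_of_int m * real p / real D)) = (\<Sum>p<D. z ^ p)"
    by (simp add: z_def Complex.DeMoivre mult_ac)
  ultimately show ?thesis
    by (simp add: geometric_sum)
qed

definition dft_kernel :: "nat \<Rightarrow> nat \<Rightarrow> nat \<Rightarrow> complex" where
  "dft_kernel D p d = cis (- 2 * pi * real p * real d / real D) / complex_of_real (sqrt (real D))"

definition idft :: "nat \<Rightarrow> (nat \<Rightarrow> complex) \<Rightarrow> (nat \<Rightarrow> complex)" where
  "idft D a = (\<lambda>d. \<Sum>p<D. cnj (dft_kernel D p d) * a p)"

lemma dft_eq_kernel_sum: "dft D z p = (\<Sum>d<D. dft_kernel D p d * z d)"
  by (simp add: dft_def dft_kernel_def)

lemma dft_kernel_commute: "dft_kernel D p d = dft_kernel D d p"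
  by (simp add: dft_kernel_def mult_ac)

lemma dft_kernel_mod:
  assumes "D > 0"
  shows "dft_kernel D p (n mod D) = dft_kernel D p n"
proof -
  have "real n = real (n mod D) + real D * real (n div D)"
    by (metis mod_mult_div_eq of_nat_add of_nat_mult)
  then have "cis (- 2 * pi * real p * real n / real D)
      = cis (- 2 * pi * real p * real (n mod D) / real D) * cis (2 * pi * real_of_int (- int (p * (n div D))))"
    unfolding cis_mult using assms by (intro arg_cong[where f = cis]) (simp add: field_simps)
  also have "cis (2 * pi * real_of_int (- int (p * (n div D)))) = 1"
    by (intro cis_multiple_2pi Ints_of_int)
  finally show ?thesis
    by (simp add: dft_kernel_def)
qed

lemma dft_kernel_add:
  assumes "D > 0"
  shows "dft_kernel D p (d + k) = complex_of_real (sqrt (real D)) * dft_kernel D p d * dft_kernel D p k"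
proof -
  have "cis (- 2 * pi * real p * real (d + k) / real D)
      = cis (- 2 * pi * real p * real d / real D) * cis (- 2 * pi * real p * real k / real D)"
    unfolding cis_mult using assms by (intro arg_cong[where f = cis]) (simp add: field_simps)
  then show ?thesis
    using assms by (simp add: dft_kernel_def)
qed

lemma dft_kernel_mult_cnj:
  assumes "D > 0"
  shows "dft_kernel D p a * cnj (dft_kernel D p b)
       = cis (2 * pi * real_of_int (int b - int a) * real p / real D) / of_nat D"
proof -
  have "- 2 * pi * real p * real a / real D + 2 * pi * real p * real b / real D
      = 2 * pi * real_of_int (int b - int a) * real p / real D"
    using assms by (simp add: field_simps)
  moreover have "complex_of_real (sqrt (real D)) * complex_of_real (sqrt (real D)) = of_nat D"
    by (simp flip: of_real_mult)
  ultimately show ?thesis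
    by (simp add: dft_kernel_def cis_cnj cis_mult)
qed

lemma dft_kernel_orthogonal:
  assumes "D > 0" and "a < D" and "b < D"
  shows "(\<Sum>p<D. dft_kernel D p a * cnj (dft_kernel D p b)) = (if a = b then 1 else 0)"
proof (cases "a = b")
  case True
  then show ?thesis
    using assms(1) by (simp add: dft_kernel_mult_cnj)
next
  case False
  then have "\<not> int D dvd int b - int a"
    using assms(2,3) int_dvd_diff_imp_eq by metis
  from sum_cis_int_multiple_eq_0[OF assms(1) this] show ?thesis
    using False
    by (simp add: dft_kernel_mult_cnj sum_divide_distrib[symmetric])
qed

lemma idft_dft:
  assumes "D > 0" and "d < D"
  shows "idft D (dft D z) d = z d"
proof -
  have "idft D (dft D z) d = (\<Sum>k<D. z k * (\<Sum>p<D. dft_kernel D p k * cnj (dft_kernel D p d)))"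
    unfolding idft_def dft_eq_kernel_sum sum_distrib_left
    by (subst sum.swap) (simp add: sum_distrib_left mult_ac)
  also have "\<dots> = (\<Sum>k<D. if k = d then z k else 0)"
    using assms by (intro sum.cong) (simp_all add: dft_kernel_orthogonal)
  also have "\<dots> = z d"
    using assms by simp
  finally show ?thesis .
qed

lemma dft_idft:
  assumes "D > 0" and "p < D"
  shows "dft D (idft D a) p = a p"
proof -
  have orth: "(\<Sum>d<D. dft_kernel D p d * cnj (dft_kernel D q d)) = (if q = p then 1 else 0)"
    if "q < D" for q
    using assms that dft_kernel_orthogonal[of D p q]
    by (simp add: dft_kernel_commute[of D p] dft_kernel_commute[of D q])
  have "dft D (idft D a) p = (\<Sum>q<D. a q * (\<Sum>d<D. dft_kernel D p d * cnj (dft_kernel D q d)))"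
    unfolding idft_def dft_eq_kernel_sum sum_distrib_left
    by (subst sum.swap) (simp add: sum_distrib_left mult_ac)
  also have "\<dots> = (\<Sum>q<D. if q = p then a q else 0)"
    by (intro sum.cong) (simp_all add: orth)
  also have "\<dots> = a p"
    using assms by simp
  finally show ?thesis .
qed

lemma dft_inner_product:
  assumes "D > 0"
  shows "(\<Sum>d<D. z d * cnj (w d)) = (\<Sum>p<D. dft D z p * cnj (dft D w p))"
proof -
  have "(\<Sum>p<D. dft D z p * cnj (dft D w p)) = (\<Sum>d<D. z d * cnj (idft D (dft D w) d))"
    unfolding idft_def dft_eq_kernel_sum sum_distrib_right
    by (subst sum.swap) (simp add: sum_distrib_left mult_ac)
  also have "\<dots> = (\<Sum>d<D. z d * cnj (w d))"
    using assms by (simp add: idft_dft)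
  finally show ?thesis ..
qed

lemma dft_scale: "dft D (\<lambda>d. c * z d) p = c * dft D z p"
  by (simp add: dft_eq_kernel_sum sum_distrib_left mult_ac)

lemma dft_diff: "dft D (cvec (\<lambda>d. f d - g d)) p = dft D (cvec f) p - dft D (cvec g) p"
  by (simp add: dft_eq_kernel_sum cvec_def sum_subtractf algebra_simps)

lemma dft_cong: "(\<And>d. d < D \<Longrightarrow> z d = w d) \<Longrightarrow> dft D z p = dft D w p"
  by (simp add: dft_eq_kernel_sum)

lemma idft_sum: "idft D (\<lambda>p. \<Sum>n\<in>A. c n * a n p) d = (\<Sum>n\<in>A. c n * idft D (a n) d)"
  unfolding idft_def sum_distrib_left by (subst sum.swap) (simp add: mult_ac)

lemma dft_update:
  assumes "d < D"
  shows "dft D (cvec (f(d := f d + s))) p = dft D (cvec f) p + complex_of_real s * dft_kernel D p d"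
proof -
  have "dft D (cvec (f(d := f d + s))) p
      = (\<Sum>k<D. dft_kernel D p k * cvec f k + (if k = d then complex_of_real s * dft_kernel D p d else 0))"
    unfolding dft_eq_kernel_sum by (intro sum.cong) (auto simp: cvec_def algebra_simps)
  then show ?thesis
    using assms by (simp add: sum.distrib dft_eq_kernel_sum)
qed

lemma dft_kernel_shift:
  assumes "D > 0"
  shows "dft_kernel D p d
       = complex_of_real (sqrt (real D)) * cnj (dft_kernel D p k) * dft_kernel D p ((d + k) mod D)"
proof -
  let ?s = "complex_of_real (sqrt (real D))"
  have "?s * cnj (dft_kernel D p k) * dft_kernel D p ((d + k) mod D)
      = (?s * ?s) * (dft_kernel D p k * cnj (dft_kernel D p k)) * dft_kernel D p d"
    using assms by (simp add: dft_kernel_mod dft_kernel_add mult_ac)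
  also have "\<dots> = dft_kernel D p d"
    using assms by (simp add: dft_kernel_mult_cnj flip: of_real_mult)
  finally show ?thesis ..
qed

lemma dft_conv:
  assumes "D > 0"
  shows "dft D (cvec (conv D h v)) p = dft D (cvec h) p * cnj (dft D (cvec v) p)"
proof -
  let ?s = "complex_of_real (sqrt (real D))"
  have shifted: "(\<Sum>d<D. dft_kernel D p d * cvec h ((d + k) mod D))
      = ?s * cnj (dft_kernel D p k) * dft D (cvec h) p" for k
  proof -
    have "dft_kernel D p d * cvec h ((d + k) mod D)
        = ?s * cnj (dft_kernel D p k) * (dft_kernel D p ((d + k) mod D) * cvec h ((d + k) mod D))" for d
      by (subst dft_kernel_shift[OF assms, of p d k]) (simp only: mult_ac)
    then have "(\<Sum>d<D. dft_kernel D p d * cvec h ((d + k) mod D))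
        = ?s * cnj (dft_kernel D p k) * (\<Sum>d<D. dft_kernel D p ((d + k) mod D) * cvec h ((d + k) mod D))"
      by (simp only: sum_distrib_left)
    also have "\<dots> = ?s * cnj (dft_kernel D p k) * dft D (cvec h) p"
      by (simp only: sum_mod_shift[of "\<lambda>m. dft_kernel D p m * cvec h m"] dft_eq_kernel_sum)
    finally show ?thesis .
  qed
  have "dft D (cvec (conv D h v)) p
      = (\<Sum>k<D. cvec v k / ?s * (\<Sum>d<D. dft_kernel D p d * cvec h ((d + k) mod D)))"
    unfolding dft_eq_kernel_sum sum_distrib_left
    by (subst sum.swap) (simp add: cvec_def conv_def sum_distrib_left mult_ac)
  also have "\<dots> = (\<Sum>k<D. cnj (dft_kernel D p k) * cvec v k) * dft D (cvec h) p"
    using assms by (simp add: shifted sum_distrib_left sum_distrib_right mult_ac)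
  also have "\<dots> = dft D (cvec h) p * cnj (dft D (cvec v) p)"
    by (simp add: dft_eq_kernel_sum cvec_def mult.commute)
  finally show ?thesis .
qed

lemma dft_conv_chain:
  assumes "D > 0"
  shows "dft D (cvec (conv_chain D x u k)) p = dft D (cvec x) p * (\<Prod>l\<in>{1..k}. cnj (dft D (cvec (u l)) p))"
  by (induction k) (simp_all add: dft_conv[OF assms] prod.cl_ivl_Suc mult_ac)

lemma pconv_inner_dft:
  assumes "D > 0" and "L \<ge> 1"
  shows "complex_of_real (pconv_inner D L x u)
       = (\<Sum>p<D. dft D (cvec x) p * (\<Prod>l\<in>{1..L}. cnj (dft D (cvec (u l)) p)))"
proof -
  have split_last: "(\<Prod>l\<in>{1..L}. c l) = (\<Prod>l\<in>{1..L - 1}. c l) * c L"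
    for c :: "nat \<Rightarrow> complex"
    using assms(2) by (cases L) (simp_all add: prod.cl_ivl_Suc)
  have "complex_of_real (pconv_inner D L x u)
      = (\<Sum>d<D. cvec (conv_chain D x u (L - 1)) d * cnj (cvec (u L) d))"
    by (simp add: pconv_inner_def cvec_def)
  also have "\<dots> = (\<Sum>p<D. dft D (cvec (conv_chain D x u (L - 1))) p * cnj (dft D (cvec (u L)) p))"
    by (rule dft_inner_product[OF assms(1)])
  also have "\<dots> = (\<Sum>p<D. dft D (cvec x) p * (\<Prod>l\<in>{1..L}. cnj (dft D (cvec (u l)) p)))"
    unfolding dft_conv_chain[OF assms(1)] split_last by (simp add: mult_ac)
  finally show ?thesis .
qed

lemma of_real_pconv_inner_update:
  fixes x :: "nat \<Rightarrow> real" and u :: "nat \<Rightarrow> nat \<Rightarrow> real"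
  assumes "D > 0" and "L \<ge> 1" and l: "l \<in> {1..L}" and d: "d < D"
  defines "a \<equiv> avec D L (dft D (cvec x)) (\<lambda>l'. dft D (cvec (u l'))) l"
  shows "complex_of_real (pconv_inner D L x (u(l := (u l)(d := u l d + s))))
       = (\<Sum>q<D. cnj (dft D (cvec (u l)) q) * a q) + complex_of_real s * idft D a d"
proof -
  let ?u' = "u(l := (u l)(d := u l d + s))"
  have "(\<Prod>l'\<in>{1..L}. cnj (dft D (cvec (?u' l')) q))
      = cnj (dft D (cvec (?u' l)) q) * (\<Prod>l'\<in>{1..L} - {l}. cnj (dft D (cvec (?u' l')) q))" for q
    using l by (simp add: prod.remove)
  also have "\<dots> q = (cnj (dft D (cvec (u l)) q) + complex_of_real s * cnj (dft_kernel D q d))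
      * (\<Prod>l'\<in>{1..L} - {l}. cnj (dft D (cvec (u l')) q))" for q
    using d by (simp add: dft_update)
  finally show ?thesis
    unfolding pconv_inner_dft[OF assms(1,2)] a_def avec_def idft_def
    by (simp add: sum.distrib sum_distrib_left algebra_simps)
qed

lemma of_real_pconv_inner_eq_avec:
  fixes x :: "nat \<Rightarrow> real" and u :: "nat \<Rightarrow> nat \<Rightarrow> real"
  assumes "D > 0" and "L \<ge> 1" and "l \<in> {1..L}"
  shows "complex_of_real (pconv_inner D L x u)
       = (\<Sum>q<D. cnj (dft D (cvec (u l)) q) * avec D L (dft D (cvec x)) (\<lambda>l'. dft D (cvec (u l'))) l q)"
  using assms(1) of_real_pconv_inner_update[OF assms, of 0 x u 0] by simp

lemma idft_avec_in_Reals: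
  fixes x :: "nat \<Rightarrow> real" and u :: "nat \<Rightarrow> nat \<Rightarrow> real"
  assumes "D > 0" and "L \<ge> 1" and "l \<in> {1..L}" and "d < D"
  shows "idft D (avec D L (dft D (cvec x)) (\<lambda>l'. dft D (cvec (u l'))) l) d \<in> \<real>"
proof -
  have "idft D (avec D L (dft D (cvec x)) (\<lambda>l'. dft D (cvec (u l'))) l) d
      = complex_of_real (pconv_inner D L x (u(l := (u l)(d := u l d + 1))) - pconv_inner D L x u)"
    using of_real_pconv_inner_update[OF assms, of x u 1] of_real_pconv_inner_eq_avec[OF assms(1-3), of x u] by simp
  then show ?thesis
    by simp
qed

lemma pconv_inner_update:
  fixes x :: "nat \<Rightarrow> real" and u :: "nat \<Rightarrow> nat \<Rightarrow> real"
  assumes "D > 0" and "L \<ge> 1" and "l \<in> {1..L}" and "d < D"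
  shows "pconv_inner D L x (u(l := (u l)(d := u l d + s)))
       = pconv_inner D L x u + s * Re (idft D (avec D L (dft D (cvec x)) (\<lambda>l'. dft D (cvec (u l'))) l) d)"
  using of_real_pconv_inner_update[OF assms, of x u s] of_real_pconv_inner_eq_avec[OF assms(1-3), of x u]
    idft_avec_in_Reals[OF assms, of x u]
  by (intro of_real_eq_iff[where 'a = complex, THEN iffD1]) simp

lemma deriv_sum_comp_affine:
  fixes f :: "'i \<Rightarrow> real \<Rightarrow> real"
  assumes "\<And>n. n \<in> A \<Longrightarrow> f n differentiable (at (p n))"
  shows "deriv (\<lambda>s. \<Sum>n\<in>A. f n (p n + s * c n)) 0 = (\<Sum>n\<in>A. deriv (f n) (p n) * c n)"
proof (rule DERIV_imp_deriv, rule DERIV_sum)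
  fix n
  assume "n \<in> A"
  then have "(f n has_real_derivative deriv (f n) (p n)) (at (p n + 0 * c n))"
    using assms by (simp add: DERIV_deriv_iff_real_differentiable)
  moreover have "((\<lambda>s. p n + s * c n) has_real_derivative c n) (at 0)"
    by (auto intro!: derivative_eq_intros)
  ultimately show "((\<lambda>s. f n (p n + s * c n)) has_real_derivative deriv (f n) (p n) * c n) (at 0)"
    by (rule DERIV_chain2)
qed

lemma grad_conv_eq_sum_idft:
  assumes "D > 0" and "L \<ge> 1" and "l \<in> {1..L}" and "d < D"
    and "\<forall>y z. (\<lambda>w. lossf w y) differentiable (at z)"
  shows "grad_conv lossf N X Y D L u l d
       = (\<Sum>n=1..N. deriv (\<lambda>z. lossf z (Y n)) (pconv_inner D L (X n) u)
            * Re (idft D (avec D L (dft D (cvec (X n))) (\<lambda>l'. dft D (cvec (u l'))) l) d))"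
  unfolding grad_conv_def loss_conv_def pconv_inner_update[OF assms(1-4)]
  using assms(5) by (intro deriv_sum_comp_affine[where f = "\<lambda>n z. lossf z (Y n)", simplified]) simp

lemma grad_conv_eq_idft_grad_diag:
  assumes "D > 0" and "L \<ge> 1" and "l \<in> {1..L}" and "d < D"
    and "\<forall>y z. (\<lambda>w. lossf w y) differentiable (at z)"
  shows "complex_of_real (grad_conv lossf N X Y D L u l d)
       = idft D (grad_diag lossf N X Y D L (\<lambda>l'. dft D (cvec (u l'))) l) d"
proof -
  have "Re (\<Sum>q<D. cnj (dft D (cvec (u l)) q)
          * avec D L (dft D (cvec (X n))) (\<lambda>l'. dft D (cvec (u l'))) l q)
      = pconv_inner D L (X n) u" for n
    using arg_cong[OF of_real_pconv_inner_eq_avec[OF assms(1-3), of "X n" u], of Re] by simp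
  then have "grad_diag lossf N X Y D L (\<lambda>l'. dft D (cvec (u l'))) l
      = (\<lambda>p. \<Sum>n=1..N. complex_of_real (deriv (\<lambda>z. lossf z (Y n)) (pconv_inner D L (X n) u))
            * avec D L (dft D (cvec (X n))) (\<lambda>l'. dft D (cvec (u l'))) l p)"
    by (intro ext) (simp add: grad_diag_def Let_def)
  then show ?thesis
    using idft_avec_in_Reals[OF assms(1-4)] by (simp add: idft_sum grad_conv_eq_sum_idft[OF assms])
qed

theorem lemma6:
  fixes lossf :: "real \<Rightarrow> real \<Rightarrow> real"
    and L D N :: nat
    and X :: "nat \<Rightarrow> nat \<Rightarrow> real"
    and Y :: "nat \<Rightarrow> real"
    and eta :: "nat \<Rightarrow> real"
    and u :: "nat \<Rightarrow> nat \<Rightarrow> nat \<Rightarrow> real"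
  assumes "L \<ge> 1" and "D \<ge> 1"
    and "\<forall>n\<in>{1..N}. Y n \<in> {-1, 1}"
    and "\<forall>y z. (\<lambda>w. lossf w y) differentiable (at z)"
    and "\<forall>t. \<forall>l\<in>{1..L}. \<forall>d<D.
           u (Suc t) l d = u t l d - eta t * grad_conv lossf N X Y D L (u t) l d"
  shows "\<forall>t. \<forall>l\<in>{1..L}. \<forall>p<D.
           dft D (cvec (\<lambda>d. u (Suc t) l d - u t l d)) p
             = dft D (cvec (u (Suc t) l)) p - dft D (cvec (u t l)) p
         \<and> dft D (cvec (u (Suc t) l)) p - dft D (cvec (u t l)) p
             = - complex_of_real (eta t) *
               grad_diag lossf N X Y D L (\<lambda>l'. dft D (cvec (u t l'))) l p"
proof (intro allI ballI impI conjI)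
  fix t l p
  assume l: "l \<in> {1..L}" and p: "p < D"
  have D: "D > 0"
    using assms(2) by simp
  let ?G = "grad_diag lossf N X Y D L (\<lambda>l'. dft D (cvec (u t l'))) l"
  show "dft D (cvec (\<lambda>d. u (Suc t) l d - u t l d)) p
      = dft D (cvec (u (Suc t) l)) p - dft D (cvec (u t l)) p"
    by (rule dft_diff)
  have step: "cvec (\<lambda>d. u (Suc t) l d - u t l d) d = - complex_of_real (eta t) * idft D ?G d"
    if "d < D" for d
  proof -
    have "complex_of_real (u (Suc t) l d - u t l d)
        = complex_of_real (- eta t * grad_conv lossf N X Y D L (u t) l d)"
      using assms(5) l that by simp
    then show ?thesis
      unfolding grad_conv_eq_idft_grad_diag[OF D assms(1) l that assms(4), symmetric]
      by (simp add: cvec_def)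
  qed
  have "dft D (cvec (u (Suc t) l)) p - dft D (cvec (u t l)) p
      = dft D (cvec (\<lambda>d. u (Suc t) l d - u t l d)) p"
    by (rule dft_diff[symmetric])
  also have "\<dots> = dft D (\<lambda>d. - complex_of_real (eta t) * idft D ?G d) p"
    using step by (rule dft_cong)
  also have "\<dots> = - complex_of_real (eta t) * ?G p"
    by (simp only: dft_scale dft_idft[OF D p])
  finally show "dft D (cvec (u (Suc t) l)) p - dft D (cvec (u t l)) p = - complex_of_real (eta t) * ?G p" .
qed

end
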